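(* Let $\lambda$ be a well-behaved hypergraph width measure, $k$ an integer, and $H$ a hypergraph with $\lambda\text{-}tw(H)\le k$. Then every clique $C$ of $\underline{\underline{H}}$ satisfies $\lambda_H(C)\le k$. Furthermore, every $(A,B)$-separator $S$ of $H$ with $\lambda_H(S)\le k$ is an $(A,B)$-separator in $\underline{\underline{H}}$.
   Context: A hypergraph $H$ has finite vertex set $V(H)$ and edge set $E(H)$ of subsets of $V(H)$; $||H||$ is the size of its encoding. The Gaifman graph $\underline{H}$ is the graph on $V(H)$ with two distinct vertices adjacent iff they lie in a common edge; $N_G(u)$ is the neighbourhood of $u$ in a graph $G$. The graph $\underline{\underline{H}}$ (depending on $k$) is obtained from $G_0=\underline{H}$ by repeatedly adding to the current graph $G_i$ an edge $uv$ between non-adjacent vertices with $\lambda_H(N_{G_i}(u)\cap N_{G_i}(v))>k$, until no such pair remains (in any order, e.g. lexicographically first). A set $S$ is an $(A,B)$-separator in a graph $G$ (of $H$: in $\underline{H}$) if $A\cap B\subseteq S$ and every path in $G$ from a vertex of $A$ to a vertex of $B$ contains a vertex of $S$. A tree decomposition of $H$ is a tree $T$ with bags $B_t\subseteq V(H)$ such that nodes containing a given vertex form a connected subtree and every edge of $\underline{H}$ is inside some bag. A width measure $\lambda$ assigns to each hypergraph $H$ a real function $\lambda_H$ on subsets of $V(H)$; $\lambda\text{-}tw(H)$ is the minimum over tree decompositions of $\max_t\lambda_H(B_t)$. $\lambda$ is well-behaved if: (1) $\lambda_H(\{x\})\ge1$; (2) $\lambda_H(S\cup T)\le\lambda_H(S)+\lambda_H(T)$;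 (3) equality in (2) for disjoint $S,T$ with no edge of $\underline{H}$ between them; (4) $\lambda_F(S)\le\lambda_H(T)$ whenever $V(H)\subseteq V(F)$, $E(H)\subseteq E(F)$ and $S\subseteq T$; (5) $\lambda_H(S)\le k$ is decidable in time $||H||^{O(k)}$. *)

theory Defs
  imports Complex_Main
begin

type_synonym 'a hypergraph = "'a set \<times> 'a set set"

definition hv :: "'a hypergraph \<Rightarrow> 'a set" where "hv H = fst H"
definition he :: "'a hypergraph \<Rightarrow> 'a set set" where "he H = snd H"

definition hypergraph :: "'a hypergraph \<Rightarrow> bool" where
  "hypergraph H \<longleftrightarrow> finite (hv H) \<and> (\<forall>e\<in>he H. e \<subseteq> hv H)"

text \<open>Simple graphs on a vertex set are represented by sets of 2-element sets.\<close>
definition gaifman :: "'a hypergraph \<Rightarrow> 'a set set" where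
  "gaifman H = {{u, v} | u v. u \<noteq> v \<and> (\<exists>e\<in>he H. u \<in> e \<and> v \<in> e)}"

definition nbh :: "'a set set \<Rightarrow> 'a \<Rightarrow> 'a set" where
  "nbh G u = {v. {u, v} \<in> G \<and> v \<noteq> u}"

definition is_path :: "'a set \<Rightarrow> 'a set set \<Rightarrow> 'a list \<Rightarrow> bool" where
  "is_path V G xs \<longleftrightarrow> xs \<noteq> [] \<and> set xs \<subseteq> V \<and>
     (\<forall>i. Suc i < length xs \<longrightarrow> xs ! i \<noteq> xs ! Suc i \<and> {xs ! i, xs ! Suc i} \<in> G)"

definition separator :: "'a set \<Rightarrow> 'a set set \<Rightarrow> 'a set \<Rightarrow> 'a set \<Rightarrow> 'a set \<Rightarrow> bool" where
  "separator V G A B S \<longleftrightarrow> A \<inter> B \<subseteq> S \<and>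
     (\<forall>xs. is_path V G xs \<and> hd xs \<in> A \<and> last xs \<in> B \<longrightarrow> set xs \<inter> S \<noteq> {})"

definition is_clique :: "'a set \<Rightarrow> 'a set set \<Rightarrow> 'a set \<Rightarrow> bool" where
  "is_clique V G C \<longleftrightarrow> C \<subseteq> V \<and> (\<forall>u\<in>C. \<forall>v\<in>C. u \<noteq> v \<longrightarrow> {u, v} \<in> G)"

definition connected_graph :: "'b set \<Rightarrow> 'b set set \<Rightarrow> bool" where
  "connected_graph N TE \<longleftrightarrow>
     (\<forall>u\<in>N. \<forall>v\<in>N. (u, v) \<in> {(x, y). x \<in> N \<and> y \<in> N \<and> {x, y} \<in> TE}\<^sup>*)"

text \<open>A (finite) tree: nonempty, connected, and minimally connected (i.e. acyclic).\<close>
definition is_tree :: "nat set \<Rightarrow> nat set set \<Rightarrow> bool" where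
  "is_tree N TE \<longleftrightarrow> finite N \<and> N \<noteq> {} \<and>
     (\<forall>e\<in>TE. e \<subseteq> N \<and> card e = 2) \<and>
     connected_graph N TE \<and> (\<forall>e\<in>TE. \<not> connected_graph N (TE - {e}))"

definition tree_decomposition :: "'a hypergraph \<Rightarrow> nat set \<Rightarrow> nat set set \<Rightarrow> (nat \<Rightarrow> 'a set) \<Rightarrow> bool" where
  "tree_decomposition H N TE bag \<longleftrightarrow> is_tree N TE \<and>
     (\<forall>t\<in>N. bag t \<subseteq> hv H) \<and>
     (\<forall>x\<in>hv H. {t\<in>N. x \<in> bag t} \<noteq> {} \<and>
        connected_graph {t\<in>N. x \<in> bag t} {e\<in>TE. e \<subseteq> {t\<in>N. x \<in> bag t}}) \<and>
     (\<forall>e\<in>gaifman H. \<exists>t\<in>N. e \<subseteq> bag t)"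

type_synonym 'a width_measure = "'a hypergraph \<Rightarrow> 'a set \<Rightarrow> real"

definition lambda_tw :: "'a width_measure \<Rightarrow> 'a hypergraph \<Rightarrow> real" where
  "lambda_tw lam H = Inf {w. \<exists>N TE bag. tree_decomposition H N TE bag \<and> w = Max ((\<lambda>t. lam H (bag t)) ` N)}"

text \<open>Well-behavedness, conditions (1)-(4); (5) is an algorithmic condition.\<close>
definition well_behaved :: "'a width_measure \<Rightarrow> bool" where
  "well_behaved lam \<longleftrightarrow>
    (\<forall>H x. hypergraph H \<and> x \<in> hv H \<longrightarrow> lam H {x} \<ge> 1) \<and>
    (\<forall>H S T. hypergraph H \<and> S \<subseteq> hv H \<and> T \<subseteq> hv H \<longrightarrow> lam H (S \<union> T) \<le> lam H S + lam H T) \<and>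
    (\<forall>H S T. hypergraph H \<and> S \<subseteq> hv H \<and> T \<subseteq> hv H \<and> S \<inter> T = {} \<and>
        (\<forall>u\<in>S. \<forall>v\<in>T. {u, v} \<notin> gaifman H) \<longrightarrow> lam H (S \<union> T) = lam H S + lam H T) \<and>
    (\<forall>H F S T. hypergraph H \<and> hypergraph F \<and> hv H \<subseteq> hv F \<and> he H \<subseteq> he F \<and>
        S \<subseteq> T \<and> T \<subseteq> hv H \<longrightarrow> lam F S \<le> lam H T)"

text \<open>One step of the saturation process defining the graph underline-underline H.\<close>
definition closure_step :: "'a width_measure \<Rightarrow> int \<Rightarrow> 'a hypergraph \<Rightarrow> 'a set set \<Rightarrow> 'a set set \<Rightarrow> bool" where
  "closure_step lam k H G G' \<longleftrightarrow> (\<exists>u v. u \<in> hv H \<and> v \<in> hv H \<and> u \<noteq> v \<and> {u, v} \<notin> G \<and>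
      lam H (nbh G u \<inter> nbh G v) > of_int k \<and> G' = insert {u, v} G)"

text \<open>G is a result of the saturation process (for any order of adding edges).\<close>
definition is_closure :: "'a width_measure \<Rightarrow> int \<Rightarrow> 'a hypergraph \<Rightarrow> 'a set set \<Rightarrow> bool" where
  "is_closure lam k H G \<longleftrightarrow> (closure_step lam k H)\<^sup>*\<^sup>* (gaifman H) G \<and>
      (\<nexists>G'. closure_step lam k H G G')"

end

theory Submission
  imports Defs
begin

text \<open>Fix a tree decomposition of width at most k. Every edge added by the saturation process
  lies in some bag: if u and v shared no bag, their node sets would be disjoint subtrees, and a
  node s separating them would have to lie in the subtree of every common neighbour of u and v,
  so all common neighbours would fit into the bag of s, whose width is at most k. Cliques of the
  saturated graph then fit into one bag by the Helly property of subtrees. For separators, a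
  new edge uv has a common neighbour outside any S of width at most k, so every path through
  uv that avoids S can be rerouted through that neighbour.\<close>

abbreviation adj :: "'b set \<Rightarrow> 'b set set \<Rightarrow> ('b \<times> 'b) set" where
  "adj N E \<equiv> {(x, y). x \<in> N \<and> y \<in> N \<and> {x, y} \<in> E}"

abbreviation connected_subtree :: "nat set set \<Rightarrow> nat set \<Rightarrow> bool" where
  "connected_subtree TE X \<equiv> connected_graph X {e\<in>TE. e \<subseteq> X}"

definition side :: "nat set \<Rightarrow> nat set set \<Rightarrow> nat \<Rightarrow> nat \<Rightarrow> nat set" where
  "side N TE s t = {x. (t, x) \<in> (adj N (TE - {{s, t}}))\<^sup>*}"

lemma adj_rtrancl_sym: "(x, y) \<in> (adj N E)\<^sup>* \<Longrightarrow> (y, x) \<in> (adj N E)\<^sup>*"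
  by (rule symD[OF sym_rtrancl]) (auto simp: sym_def insert_commute)

lemma side_swap: "side N TE t s = {x. (s, x) \<in> (adj N (TE - {{s, t}}))\<^sup>*}"
  unfolding side_def by (simp add: insert_commute)

lemma side_self: "t \<in> side N TE s t"
  unfolding side_def by simp

lemma side_subset: "side N TE s t \<subseteq> insert t N"
proof
  fix x assume "x \<in> side N TE s t"
  then have "(t, x) \<in> (adj N (TE - {{s, t}}))\<^sup>*" by (simp add: side_def)
  then show "x \<in> insert t N" by (induction rule: rtrancl_induct) auto
qed

lemma tree_edge_endpoints:
  assumes "is_tree N TE" and "{s, t} \<in> TE"
  shows "s \<noteq> t" "s \<in> N" "t \<in> N"
proof -
  have "card {s, t} = 2" "{s, t} \<subseteq> N" using assms unfolding is_tree_def by blast+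
  then show "s \<noteq> t" "s \<in> N" "t \<in> N" by (auto simp: card_insert_if split: if_splits)
qed

lemma tree_sides_cover:
  assumes tr: "is_tree N TE" and e: "{s, t} \<in> TE" and x: "x \<in> N"
  shows "x \<in> side N TE s t \<or> x \<in> side N TE t s"
proof -
  have "(s, x) \<in> (adj N TE)\<^sup>*"
    using tr tree_edge_endpoints[OF tr e] x unfolding is_tree_def connected_graph_def by blast
  then have "(t, x) \<in> (adj N (TE - {{s, t}}))\<^sup>* \<or> (s, x) \<in> (adj N (TE - {{s, t}}))\<^sup>*"
  proof (induction rule: rtrancl_induct)
    case (step z y)
    show ?case
    proof (cases "{z, y} = {s, t}")
      case True
      then show ?thesis by (auto simp: doubleton_eq_iff)
    next
      case False
      then have "(z, y) \<in> adj N (TE - {{s, t}})" using step(2) by auto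
      then show ?thesis using step(3) by (meson rtrancl_into_rtrancl)
    qed
  qed simp
  then show ?thesis unfolding side_def[of N TE s t] side_swap[of N TE t s] by simp
qed

text \<open>Minimality of the tree: otherwise {s, t} could be deleted keeping N connected.\<close>
lemma tree_sides_disjoint:
  assumes tr: "is_tree N TE" and e: "{s, t} \<in> TE"
  shows "side N TE s t \<inter> side N TE t s = {}"
proof (rule ccontr)
  let ?R = "adj N (TE - {{s, t}})"
  assume "side N TE s t \<inter> side N TE t s \<noteq> {}"
  then obtain x where tx: "(t, x) \<in> ?R\<^sup>*" and sx: "(s, x) \<in> ?R\<^sup>*"
    unfolding side_def[of N TE s t] side_swap[of N TE t s] by blast
  have st: "(s, t) \<in> ?R\<^sup>*" using rtrancl_trans[OF sx adj_rtrancl_sym[OF tx]] .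
  have from_s: "(s, y) \<in> ?R\<^sup>*" if "y \<in> N" for y
    using tree_sides_cover[OF tr e that] rtrancl_trans[OF st] unfolding side_def[of N TE s t] side_swap[of N TE t s] by blast
  have "connected_graph N (TE - {{s, t}})"
    unfolding connected_graph_def using rtrancl_trans[OF adj_rtrancl_sym[OF from_s] from_s] by blast
  then show False using tr e unfolding is_tree_def by blast
qed

lemma connected_subtree_crossing:
  assumes tr: "is_tree N TE" and e: "{s, t} \<in> TE" and XN: "X \<subseteq> N"
    and cX: "connected_subtree TE X"
    and a: "a \<in> X" "a \<in> side N TE t s" and b: "b \<in> X" "b \<in> side N TE s t"
  shows "s \<in> X \<and> t \<in> X"
proof -
  have "(a, b) \<in> (adj X {e\<in>TE. e \<subseteq> X})\<^sup>*" using cX a b unfolding connected_graph_def by blast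
  then have "b \<in> side N TE t s \<or> (s \<in> X \<and> t \<in> X)"
  proof (induction rule: rtrancl_induct)
    case base then show ?case using a by simp
  next
    case (step z y)
    show ?case
    proof (cases "{z, y} = {s, t}")
      case True
      then show ?thesis using step(2) by (auto simp: doubleton_eq_iff)
    next
      case False
      then have "(z, y) \<in> adj N (TE - {{s, t}})" using step(2) XN by auto
      then show ?thesis using step(3) by (auto simp: side_swap intro: rtrancl_into_rtrancl)
    qed
  qed
  then show ?thesis using tree_sides_disjoint[OF tr e] b by blast
qed

lemma connected_subtree_in_side:
  assumes tr: "is_tree N TE" and XN: "X \<subseteq> N" and cX: "connected_subtree TE X"
    and ne: "X \<noteq> {}" and s: "s \<in> N" "s \<notin> X"
  shows "\<exists>t. {s, t} \<in> TE \<and> X \<subseteq> side N TE s t"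
proof -
  obtain a where a: "a \<in> X" using ne by blast
  have "(s, a) \<in> (adj N TE)\<^sup>*" using tr s a XN unfolding is_tree_def connected_graph_def by blast
  then have "a = s \<or> (\<exists>t. {s, t} \<in> TE \<and> a \<in> side N TE s t)"
  proof (induction rule: rtrancl_induct)
    case (step z y)
    then have zy: "{z, y} \<in> TE" by auto
    from step(3) show ?case
    proof
      assume "z = s"
      then show ?thesis using zy side_self by blast
    next
      assume "\<exists>t. {s, t} \<in> TE \<and> z \<in> side N TE s t"
      then obtain t where t: "{s, t} \<in> TE" "z \<in> side N TE s t" by blast
      show ?thesis
      proof (cases "{z, y} = {s, t}")
        case True
        then show ?thesis using t side_self by (auto simp: doubleton_eq_iff)
      next
        case False
        then have "(z, y) \<in> adj N (TE - {{s, t}})" using step(2) by auto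
        then show ?thesis using t by (auto simp: side_def intro: rtrancl_into_rtrancl)
      qed
    qed
  qed simp
  then obtain t where t: "{s, t} \<in> TE" "a \<in> side N TE s t" using a s by blast
  have "b \<in> side N TE s t" if b: "b \<in> X" for b
  proof (rule ccontr)
    assume "b \<notin> side N TE s t"
    then have "b \<in> side N TE t s" using tree_sides_cover[OF tr t(1)] b XN by blast
    then show False using connected_subtree_crossing[OF tr t(1) XN cX b _ a t(2)] s by blast
  qed
  then show ?thesis using t by blast
qed

lemma side_card_decreasing:
  assumes tr: "is_tree N TE" and e1: "{s, t} \<in> TE" and e2: "{t, r} \<in> TE" and rs: "r \<noteq> s"
  shows "card (side N TE t r) < card (side N TE s t)"
proof -
  note n1 = tree_edge_endpoints[OF tr e1] and n2 = tree_edge_endpoints[OF tr e2]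
  have sub: "side N TE t r \<subseteq> side N TE s t"
  proof
    fix x assume "x \<in> side N TE t r"
    then have "(r, x) \<in> (adj N (TE - {{t, r}}))\<^sup>*" by (simp add: side_def)
    then show "x \<in> side N TE s t"
    proof (induction rule: rtrancl_induct)
      case base
      have "(t, r) \<in> adj N (TE - {{s, t}})" using n1 n2 e2 rs by (auto simp: doubleton_eq_iff)
      then show ?case by (simp add: side_def r_into_rtrancl)
    next
      case (step z y)
      show ?case
      proof (cases "{z, y} = {s, t}")
        case False
        then have "(z, y) \<in> adj N (TE - {{s, t}})" using step(2) by auto
        then show ?thesis using step(3) by (auto simp: side_def intro: rtrancl_into_rtrancl)
      next
        case True
        then have "z = s \<or> z = t" by (auto simp: doubleton_eq_iff)
        moreover have "s \<notin> side N TE s t" using tree_sides_disjoint[OF tr e1] side_self by blast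
        moreover have "t \<notin> side N TE t r" using tree_sides_disjoint[OF tr e2] side_self by blast
        ultimately show ?thesis using step(1,3) by (auto simp: side_def)
      qed
    qed
  qed
  have "t \<notin> side N TE t r" using tree_sides_disjoint[OF tr e2] side_self by blast
  then have "side N TE t r \<subset> side N TE s t" using sub side_self by blast
  moreover have "finite (side N TE s t)"
    using side_subset[of N TE s t] tr unfolding is_tree_def by (meson finite_insert finite_subset)
  ultimately show ?thesis by (rule psubset_card_mono[rotated])
qed

text \<open>A walk along tree edges that never turns back terminates: the sides ahead shrink.\<close>
lemma tree_no_infinite_walk:
  assumes tr: "is_tree N TE" and start: "P s0 t0"
    and edge: "\<And>s t. P s t \<Longrightarrow> {s, t} \<in> TE"
    and step: "\<And>s t. P s t \<Longrightarrow> \<exists>r. r \<noteq> s \<and> {t, r} \<in> TE \<and> P t r"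
  shows False
proof -
  have "P s t \<Longrightarrow> False" if "card (side N TE s t) = n" for n s t
    using that
  proof (induction n arbitrary: s t rule: less_induct)
    case (less n)
    then obtain r where "r \<noteq> s" "{t, r} \<in> TE" "P t r" using step by blast
    then show False using less side_card_decreasing[OF tr edge] by blast
  qed
  then show False using start by blast
qed

text \<open>The node s is where the way from Tu to Tv leaves Tu.\<close>
lemma disjoint_subtrees_separator_node:
  assumes tr: "is_tree N TE" and uN: "Tu \<subseteq> N" and vN: "Tv \<subseteq> N"
    and cu: "connected_subtree TE Tu" and cv: "connected_subtree TE Tv"
    and neu: "Tu \<noteq> {}" and nev: "Tv \<noteq> {}" and disj: "Tu \<inter> Tv = {}"
  shows "\<exists>s\<in>N. \<forall>X. X \<subseteq> N \<longrightarrow> connected_subtree TE X \<longrightarrow> X \<inter> Tu \<noteq> {} \<longrightarrow> X \<inter> Tv \<noteq> {} \<longrightarrow> s \<in> X"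
proof -
  define Q where "Q s t \<longleftrightarrow> {s, t} \<in> TE \<and> s \<in> Tu \<and> Tv \<subseteq> side N TE s t" for s t
  have towards_Tv: "\<exists>t. Q s t" if "s \<in> Tu" for s
    using connected_subtree_in_side[OF tr vN cv nev] that uN disj by (auto simp: Q_def)
  have "\<exists>s t. Q s t \<and> t \<notin> Tu"
  proof (rule ccontr)
    assume "\<nexists>s t. Q s t \<and> t \<notin> Tu"
    then have step: "\<exists>r. r \<noteq> s \<and> {t, r} \<in> TE \<and> Q t r" if "Q s t" for s t
    proof -
      have "t \<in> Tu" using that \<open>\<nexists>s t. Q s t \<and> t \<notin> Tu\<close> by blast
      then obtain r where r: "Q t r" using towards_Tv by blast
      have "r \<noteq> s"
        using that r nev tree_sides_disjoint[OF tr, of s t] by (auto simp: Q_def)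
      then show ?thesis using r by (auto simp: Q_def)
    qed
    obtain s0 t0 where "Q s0 t0" using neu towards_Tv by blast
    then show False using tree_no_infinite_walk[OF tr _ _ step] by (auto simp: Q_def)
  qed
  then obtain s t where e: "{s, t} \<in> TE" and sU: "s \<in> Tu" and tU: "t \<notin> Tu"
    and vsub: "Tv \<subseteq> side N TE s t"
    by (auto simp: Q_def)
  have "s \<in> X" if X: "X \<subseteq> N" "connected_subtree TE X" "X \<inter> Tu \<noteq> {}" "X \<inter> Tv \<noteq> {}" for X
  proof -
    obtain a b where a: "a \<in> X" "a \<in> Tu" and b: "b \<in> X" "b \<in> Tv" using X by blast
    have "a \<in> side N TE t s"
    proof (rule ccontr)
      assume "a \<notin> side N TE t s"
      then have "a \<in> side N TE s t" using tree_sides_cover[OF tr e] a uN by blast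
      then show False
        using connected_subtree_crossing[OF tr e uN cu sU side_self a(2)] tU by blast
    qed
    then show "s \<in> X" using connected_subtree_crossing[OF tr e X(1,2) a(1) _ b(1)] b vsub by blast
  qed
  then show ?thesis using tree_edge_endpoints[OF tr e] by blast
qed

text \<open>Otherwise from every node some subtree lies beyond one of its edges, and walking
  towards such subtrees never turns back.\<close>
lemma subtrees_helly:
  assumes tr: "is_tree N TE"
    and T: "\<And>x. x \<in> C \<Longrightarrow> T x \<subseteq> N \<and> connected_subtree TE (T x) \<and> T x \<noteq> {}"
    and pairwise: "\<And>x y. x \<in> C \<Longrightarrow> y \<in> C \<Longrightarrow> T x \<inter> T y \<noteq> {}"
  shows "\<exists>s\<in>N. \<forall>x\<in>C. s \<in> T x"
proof (rule ccontr)
  assume none: "\<not> (\<exists>s\<in>N. \<forall>x\<in>C. s \<in> T x)"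
  define P where "P s t \<longleftrightarrow> {s, t} \<in> TE \<and> (\<forall>y\<in>C. T y \<inter> side N TE s t \<noteq> {})" for s t
  have escape: "\<exists>t x. P s t \<and> x \<in> C \<and> T x \<subseteq> side N TE s t" if s: "s \<in> N" for s
  proof -
    obtain x where x: "x \<in> C" "s \<notin> T x" using none s by blast
    then obtain t where t: "{s, t} \<in> TE" "T x \<subseteq> side N TE s t"
      using connected_subtree_in_side[OF tr _ _ _ s x(2)] T[OF x(1)] by blast
    then have "P s t" using pairwise[OF _ x(1)] unfolding P_def by blast
    then show ?thesis using t x by blast
  qed
  have step: "\<exists>r. r \<noteq> s \<and> {t, r} \<in> TE \<and> P t r" if st: "P s t" for s t
  proof -
    have e: "{s, t} \<in> TE" using st by (simp add: P_def)
    obtain r x where r: "P t r" and x: "x \<in> C" "T x \<subseteq> side N TE t r"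
      using escape tree_edge_endpoints[OF tr e] by blast
    have "T x \<inter> side N TE s t \<noteq> {}" using st x(1) unfolding P_def by blast
    then have "r \<noteq> s" using x(2) tree_sides_disjoint[OF tr e] by blast
    then show ?thesis using r unfolding P_def by blast
  qed
  obtain s0 where "s0 \<in> N" using tr unfolding is_tree_def by blast
  then obtain t0 where "P s0 t0" using escape by blast
  then show False using tree_no_infinite_walk[OF tr _ _ step] unfolding P_def by blast
qed

lemma all_Suc_less_Cons:
  "(\<forall>i. Suc i < length (x # ys) \<longrightarrow> P ((x # ys) ! i) ((x # ys) ! Suc i)) \<longleftrightarrow>
   (ys \<noteq> [] \<longrightarrow> P x (hd ys)) \<and> (\<forall>i. Suc i < length ys \<longrightarrow> P (ys ! i) (ys ! Suc i))"
  by (cases ys) (auto simp: All_less_Suc2 less_Suc_eq_0_disj)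

lemma is_path_Cons_Cons:
  "is_path V G (x # y # zs) \<longleftrightarrow> x \<in> V \<and> x \<noteq> y \<and> {x, y} \<in> G \<and> is_path V G (y # zs)"
  using all_Suc_less_Cons[of x "y # zs" "\<lambda>a b. a \<noteq> b \<and> {a, b} \<in> G"]
  unfolding is_path_def by auto

lemma path_reroute_common_neighbour:
  assumes w: "w \<in> V" "w \<notin> S" "{u, w} \<in> G" "{v, w} \<in> G" "w \<noteq> u" "w \<noteq> v"
  shows "is_path V (insert {u, v} G) xs \<Longrightarrow> set xs \<inter> S = {} \<Longrightarrow>
    \<exists>ys. is_path V G ys \<and> hd ys = hd xs \<and> last ys = last xs \<and> set ys \<inter> S = {}"
proof (induction xs)
  case Nil then show ?case by (simp add: is_path_def)
next
  case (Cons x xs)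
  show ?case
  proof (cases "xs = []")
    case True
    then show ?thesis using Cons.prems by (intro exI[of _ "[x]"]) (simp add: is_path_def)
  next
    case False
    then obtain y zs where xs: "xs = y # zs" by (cases xs) auto
    have x: "x \<in> V" "x \<notin> S" "x \<noteq> y" and xy: "{x, y} \<in> insert {u, v} G"
      using Cons.prems unfolding xs is_path_Cons_Cons by auto
    have "is_path V (insert {u, v} G) xs" "set xs \<inter> S = {}"
      using Cons.prems unfolding xs is_path_Cons_Cons by auto
    then obtain ys where ys: "is_path V G ys" "hd ys = y" "last ys = last xs" "set ys \<inter> S = {}"
      using Cons.IH unfolding xs by auto
    then obtain ys' where ysc: "ys = y # ys'" by (cases ys) (auto simp: is_path_def)
    have last: "last (x # xs) = last ys" using ys(3) xs by simp
    show ?thesis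
    proof (cases "{x, y} \<in> G")
      case True
      then have "is_path V G (x # ys)" using ysc ys(1) x by (simp add: is_path_Cons_Cons)
      then show ?thesis using ys(4) x(2) last ysc by (intro exI[of _ "x # ys"]) auto
    next
      case False
      then have "{x, y} = {u, v}" using xy by blast
      then have "x \<noteq> w" "y \<noteq> w" "{x, w} \<in> G" "{w, y} \<in> G"
        using w(3-6) by (auto simp: doubleton_eq_iff insert_commute)
      then have "is_path V G (x # w # ys)" using ysc ys(1) w(1) x by (simp add: is_path_Cons_Cons)
      then show ?thesis using ys(4) x(2) w(2) last ysc by (intro exI[of _ "x # w # ys"]) auto
    qed
  qed
qed

lemma well_behaved_mono:
  assumes "well_behaved lam" "hypergraph H" "S \<subseteq> T" "T \<subseteq> hv H"
  shows "lam H S \<le> lam H T"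
proof -
  have "\<forall>H F S T. hypergraph H \<and> hypergraph F \<and> hv H \<subseteq> hv F \<and> he H \<subseteq> he F \<and>
      S \<subseteq> T \<and> T \<subseteq> hv H \<longrightarrow> lam F S \<le> lam H T"
    using assms(1) unfolding well_behaved_def by (elim conjE)
  from this[rule_format, of H H S T] show ?thesis using assms(2-4) by simp
qed

lemma gaifman_subset: "hypergraph H \<Longrightarrow> e \<in> gaifman H \<Longrightarrow> e \<subseteq> hv H"
  unfolding gaifman_def hypergraph_def by blast

lemma saturation_edges_subset:
  assumes "hypergraph H" and "(closure_step lam k H)\<^sup>*\<^sup>* (gaifman H) G"
  shows "\<forall>e\<in>G. e \<subseteq> hv H"
  using assms(2) by induction (auto simp: closure_step_def gaifman_subset[OF assms(1)])

lemma saturation_preserves_separator: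
  assumes wb: "well_behaved lam" and hg: "hypergraph H"
    and SV: "S \<subseteq> hv H" and Sk: "lam H S \<le> of_int k"
    and sep: "separator (hv H) (gaifman H) A B S"
    and sat: "(closure_step lam k H)\<^sup>*\<^sup>* (gaifman H) G"
  shows "separator (hv H) G A B S"
  using sat
proof (induction rule: rtranclp_induct)
  case base then show ?case using sep .
next
  case (step G1 G2)
  obtain u v where uv: "lam H (nbh G1 u \<inter> nbh G1 v) > of_int k" "G2 = insert {u, v} G1"
    using step(2) unfolding closure_step_def by blast
  have "\<not> nbh G1 u \<inter> nbh G1 v \<subseteq> S"
  proof
    assume "nbh G1 u \<inter> nbh G1 v \<subseteq> S"
    then have "lam H (nbh G1 u \<inter> nbh G1 v) \<le> lam H S" by (rule well_behaved_mono[OF wb hg _ SV])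
    then show False using uv(1) Sk by linarith
  qed
  then obtain w where w: "w \<in> nbh G1 u" "w \<in> nbh G1 v" "w \<notin> S" by blast
  then have wG: "{u, w} \<in> G1" "{v, w} \<in> G1" "w \<noteq> u" "w \<noteq> v" unfolding nbh_def by auto
  then have wV: "w \<in> hv H" using saturation_edges_subset[OF hg step(1)] by blast
  have AB: "A \<inter> B \<subseteq> S"
    and paths: "\<And>ys. is_path (hv H) G1 ys \<Longrightarrow> hd ys \<in> A \<Longrightarrow> last ys \<in> B \<Longrightarrow> set ys \<inter> S \<noteq> {}"
    using step(3) unfolding separator_def by blast+
  have "set xs \<inter> S \<noteq> {}" if xs: "is_path (hv H) G2 xs" "hd xs \<in> A" "last xs \<in> B" for xs
  proof
    assume "set xs \<inter> S = {}"
    then obtain ys where "is_path (hv H) G1 ys" "hd ys = hd xs" "last ys = last xs" "set ys \<inter> S = {}"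
      using path_reroute_common_neighbour[OF wV w(3) wG] xs(1) uv(2) by blast
    then show False using paths xs(2,3) by metis
  qed
  then show ?case using AB unfolding separator_def by blast
qed

abbreviation nodes_containing :: "nat set \<Rightarrow> (nat \<Rightarrow> 'a set) \<Rightarrow> 'a \<Rightarrow> nat set" where
  "nodes_containing N bag x \<equiv> {t\<in>N. x \<in> bag t}"

lemma tree_decomposition_trivial:
  assumes "hypergraph H"
  shows "tree_decomposition H {0} {} (\<lambda>_. hv H)"
proof -
  have "connected_graph {0::nat} {}" unfolding connected_graph_def by simp
  then show ?thesis
    using gaifman_subset[OF assms]
    unfolding tree_decomposition_def is_tree_def by (auto simp: Collect_conv_if)
qed

text \<open>The infimum in the definition of lambda_tw is attained, since only the finitely many
  values of lam H on subsets of hv H occur as widths.\<close>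
lemma tree_decomposition_of_width:
  assumes hg: "hypergraph H" and tw: "lambda_tw lam H \<le> of_int k"
  shows "\<exists>N TE bag. tree_decomposition H N TE bag \<and> (\<forall>t\<in>N. lam H (bag t) \<le> of_int k)"
proof -
  define Ws where "Ws = {w. \<exists>N TE bag. tree_decomposition H N TE bag \<and> w = Max ((\<lambda>t. lam H (bag t)) ` N)}"
  have "Ws \<subseteq> lam H ` Pow (hv H)"
  proof
    fix w assume "w \<in> Ws"
    then obtain N TE bag where td: "tree_decomposition H N TE bag"
      and w: "w = Max ((\<lambda>t. lam H (bag t)) ` N)"
      unfolding Ws_def by blast
    then have "finite N" "N \<noteq> {}" and bags: "\<forall>t\<in>N. bag t \<subseteq> hv H"
      unfolding tree_decomposition_def is_tree_def by blast+
    then have "w \<in> (\<lambda>t. lam H (bag t)) ` N" unfolding w by (intro Max_in) simp_all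
    then show "w \<in> lam H ` Pow (hv H)" using bags by blast
  qed
  moreover have "finite (hv H)" using hg unfolding hypergraph_def by blast
  ultimately have fin: "finite Ws" by (meson finite_imageI finite_Pow_iff finite_subset)
  have "Ws \<noteq> {}" using tree_decomposition_trivial[OF hg] unfolding Ws_def by blast
  then have "Inf Ws \<in> Ws" using cInf_eq_Min[OF fin] Min_in[OF fin] by simp
  then obtain N TE bag where td: "tree_decomposition H N TE bag"
    and w: "lambda_tw lam H = Max ((\<lambda>t. lam H (bag t)) ` N)"
    unfolding Ws_def lambda_tw_def by blast
  have "finite N" using td unfolding tree_decomposition_def is_tree_def by blast
  then have "lam H (bag t) \<le> lambda_tw lam H" if "t \<in> N" for t
    unfolding w using that by (intro Max_ge) simp_all
  then show ?thesis using td tw by force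
qed

lemma common_neighbours_in_bag:
  assumes td: "tree_decomposition H N TE bag" and edges: "\<forall>e\<in>G. \<exists>t\<in>N. e \<subseteq> bag t"
    and uv: "u \<in> hv H" "v \<in> hv H" and apart: "\<not> (\<exists>t\<in>N. {u, v} \<subseteq> bag t)"
  shows "\<exists>s\<in>N. nbh G u \<inter> nbh G v \<subseteq> bag s"
proof -
  have tr: "is_tree N TE" and bags: "\<forall>t\<in>N. bag t \<subseteq> hv H"
    and subtree: "\<And>x. x \<in> hv H \<Longrightarrow> nodes_containing N bag x \<noteq> {} \<and>
        connected_subtree TE (nodes_containing N bag x)"
    using td unfolding tree_decomposition_def by blast+
  have disj: "nodes_containing N bag u \<inter> nodes_containing N bag v = {}" using apart by blast
  have su: "nodes_containing N bag u \<noteq> {}" "connected_subtree TE (nodes_containing N bag u)"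
    and sv: "nodes_containing N bag v \<noteq> {}" "connected_subtree TE (nodes_containing N bag v)"
    using subtree[OF uv(1)] subtree[OF uv(2)] by blast+
  obtain s where sN: "s \<in> N"
    and s_between: "\<forall>X. X \<subseteq> N \<longrightarrow> connected_subtree TE X \<longrightarrow>
      X \<inter> nodes_containing N bag u \<noteq> {} \<longrightarrow> X \<inter> nodes_containing N bag v \<noteq> {} \<longrightarrow> s \<in> X"
    using disjoint_subtrees_separator_node[OF tr Collect_restrict Collect_restrict su(2) sv(2) su(1) sv(1) disj]
    by blast
  have "w \<in> bag s" if "w \<in> nbh G u \<inter> nbh G v" for w
  proof -
    have "{u, w} \<in> G" "{v, w} \<in> G" using that unfolding nbh_def by auto
    then obtain t1 t2 where t: "t1 \<in> N" "{u, w} \<subseteq> bag t1" "t2 \<in> N" "{v, w} \<subseteq> bag t2"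
      using edges by meson
    then have "w \<in> hv H" using bags by blast
    have "s \<in> nodes_containing N bag w"
    proof (rule s_between[rule_format, OF Collect_restrict])
      show "connected_subtree TE (nodes_containing N bag w)" using subtree[OF \<open>w \<in> hv H\<close>] ..
      show "nodes_containing N bag w \<inter> nodes_containing N bag u \<noteq> {}"
        "nodes_containing N bag w \<inter> nodes_containing N bag v \<noteq> {}" using t by blast+
    qed
    then show "w \<in> bag s" by blast
  qed
  then show ?thesis using sN by blast
qed

lemma saturation_edges_in_bags:
  assumes wb: "well_behaved lam" and hg: "hypergraph H" and td: "tree_decomposition H N TE bag"
    and width: "\<forall>t\<in>N. lam H (bag t) \<le> of_int k"
    and sat: "(closure_step lam k H)\<^sup>*\<^sup>* (gaifman H) G"
  shows "\<forall>e\<in>G. \<exists>t\<in>N. e \<subseteq> bag t"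
  using sat
proof (induction rule: rtranclp_induct)
  case base then show ?case using td unfolding tree_decomposition_def by blast
next
  case (step G1 G2)
  obtain u v where uv: "u \<in> hv H" "v \<in> hv H"
      "lam H (nbh G1 u \<inter> nbh G1 v) > of_int k" "G2 = insert {u, v} G1"
    using step(2) unfolding closure_step_def by blast
  have "\<exists>t\<in>N. {u, v} \<subseteq> bag t"
  proof (rule ccontr)
    assume "\<not> (\<exists>t\<in>N. {u, v} \<subseteq> bag t)"
    then obtain s where s: "s \<in> N" "nbh G1 u \<inter> nbh G1 v \<subseteq> bag s"
      using common_neighbours_in_bag[OF td step(3) uv(1,2)] by blast
    moreover have "bag s \<subseteq> hv H" using td s(1) unfolding tree_decomposition_def by blast
    ultimately have "lam H (nbh G1 u \<inter> nbh G1 v) \<le> lam H (bag s)"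
      by (intro well_behaved_mono[OF wb hg])
    then show False using width s(1) uv(3) by fastforce
  qed
  then show ?case using step(3) uv(4) by blast
qed

lemma clique_in_bag:
  assumes td: "tree_decomposition H N TE bag" and edges: "\<forall>e\<in>G. \<exists>t\<in>N. e \<subseteq> bag t"
    and clique: "is_clique (hv H) G C"
  shows "\<exists>t\<in>N. C \<subseteq> bag t"
proof -
  have tr: "is_tree N TE" and subtree: "\<And>x. x \<in> hv H \<Longrightarrow> nodes_containing N bag x \<noteq> {} \<and>
      connected_subtree TE (nodes_containing N bag x)"
    using td unfolding tree_decomposition_def by blast+
  have CV: "C \<subseteq> hv H" and Cedges: "\<And>x y. x \<in> C \<Longrightarrow> y \<in> C \<Longrightarrow> x \<noteq> y \<Longrightarrow> {x, y} \<in> G"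
    using clique unfolding is_clique_def by blast+
  have pairwise: "nodes_containing N bag x \<inter> nodes_containing N bag y \<noteq> {}" if xy: "x \<in> C" "y \<in> C" for x y
  proof (cases "x = y")
    case True then show ?thesis using subtree[of x] xy(1) CV by auto
  next
    case False
    then obtain t where "t \<in> N" "{x, y} \<subseteq> bag t" using edges Cedges[OF xy] by blast
    then show ?thesis by blast
  qed
  have subtrees: "nodes_containing N bag x \<subseteq> N \<and> connected_subtree TE (nodes_containing N bag x)
      \<and> nodes_containing N bag x \<noteq> {}" if "x \<in> C" for x
    using subtree[of x] that CV by blast
  obtain s where "s \<in> N" "\<forall>x\<in>C. s \<in> nodes_containing N bag x"
    using subtrees_helly[of N TE C "nodes_containing N bag", OF tr subtrees pairwise] by blast
  then show ?thesis by auto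
qed

theorem mainTheorem18:
  fixes lam :: "'a width_measure" and k :: int and H :: "'a hypergraph" and G :: "'a set set"
  assumes "well_behaved lam"
    and "hypergraph H"
    and "lambda_tw lam H \<le> of_int k"
    and "is_closure lam k H G"
  shows "(\<forall>C. is_clique (hv H) G C \<longrightarrow> lam H C \<le> of_int k) \<and>
         (\<forall>A B S. S \<subseteq> hv H \<longrightarrow> separator (hv H) (gaifman H) A B S \<longrightarrow> lam H S \<le> of_int k \<longrightarrow>
             separator (hv H) G A B S)"
proof -
  have sat: "(closure_step lam k H)\<^sup>*\<^sup>* (gaifman H) G" using assms(4) unfolding is_closure_def ..
  obtain N TE bag where td: "tree_decomposition H N TE bag"
    and width: "\<forall>t\<in>N. lam H (bag t) \<le> of_int k"
    using tree_decomposition_of_width[OF assms(2,3)] by blast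
  have edges: "\<forall>e\<in>G. \<exists>t\<in>N. e \<subseteq> bag t"
    using saturation_edges_in_bags[OF assms(1,2) td width sat] .
  have "lam H C \<le> of_int k" if clique: "is_clique (hv H) G C" for C
  proof -
    obtain t where t: "t \<in> N" "C \<subseteq> bag t" using clique_in_bag[OF td edges clique] by blast
    moreover have "bag t \<subseteq> hv H" using td t(1) unfolding tree_decomposition_def by blast
    ultimately have "lam H C \<le> lam H (bag t)" by (intro well_behaved_mono[OF assms(1,2)])
    then show ?thesis using width t(1) by fastforce
  qed
  moreover have "separator (hv H) G A B S"
    if "S \<subseteq> hv H" "separator (hv H) (gaifman H) A B S" "lam H S \<le> of_int k" for A B S
    using saturation_preserves_separator[OF assms(1,2) that(1,3,2) sat] .
  ultimately show ?thesis by blast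
qed

end
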